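(* Let $G$ be a $k$-degenerate graph with maximum degree $\Delta(G)$ and let $H$ be an $l$-degenerate graph. Then $AT(G+_T H)\le \max\{2\Delta(G),\,k+l\}+1$.
   Context: A graph is $k$-degenerate if its vertices can be successively deleted so that each deleted vertex has degree at most $k$ at the time of deletion. For an orientation $D$, a subdigraph is Eulerian if every vertex has equal in- and outdegree in it; $D$ is an AT-orientation if the numbers of Eulerian subgraphs with an even and with an odd number of arcs differ; $AT(G)$ is the smallest $k$ such that $G$ has an AT-orientation of maximum outdegree at most $k-1$. $T(G)$ has vertex set $V(G)\cup E(G)$: it consists of $G$, together with, for each edge $e=xy$, edges $ex$ and $ey$, and edges $ee'$ whenever edges $e,e'$ are adjacent in $G$. $G+_T H$ has vertex set $(V(G)\cup E(G))\times V(H)$, with $(u_1,u_2)\sim(v_1,v_2)$ iff [$u_1=v_1\in V(G)$ and $u_2v_2\in E(H)$] or [$u_2=v_2$ and $u_1v_1\in E(T(G))$]. *)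

theory Defs
  imports Main
begin

definition simple_graph :: "'a set \<Rightarrow> 'a set set \<Rightarrow> bool" where
  "simple_graph V E \<longleftrightarrow> finite V \<and>
     (\<forall>e\<in>E. \<exists>x y. x \<noteq> y \<and> x \<in> V \<and> y \<in> V \<and> e = {x, y})"

definition degree :: "'a set set \<Rightarrow> 'a \<Rightarrow> nat" where
  "degree E v = card {e\<in>E. v \<in> e}"

definition max_degree :: "'a set \<Rightarrow> 'a set set \<Rightarrow> nat" where
  "max_degree V E = Max (insert 0 (degree E ` V))"

text \<open>k-degenerate: there is an elimination order vs (vs!0 deleted first) such that
  each vertex has at most k neighbours among the vertices not yet deleted.\<close>
definition degenerate :: "'a set \<Rightarrow> 'a set set \<Rightarrow> nat \<Rightarrow> bool" where
  "degenerate V E k \<longleftrightarrow> (\<exists>vs. distinct vs \<and> set vs = V \<and>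
     (\<forall>i<length vs. card {u \<in> set (drop (Suc i) vs). {vs ! i, u} \<in> E} \<le> k))"

definition orientation :: "'a set \<Rightarrow> 'a set set \<Rightarrow> ('a \<times> 'a) set \<Rightarrow> bool" where
  "orientation V E D \<longleftrightarrow> (\<forall>(x, y)\<in>D. {x, y} \<in> E) \<and>
     (\<forall>x y. {x, y} \<in> E \<longrightarrow> x \<noteq> y \<longrightarrow> ((x, y) \<in> D \<longleftrightarrow> (y, x) \<notin> D))"

definition outdeg :: "('a \<times> 'a) set \<Rightarrow> 'a \<Rightarrow> nat" where
  "outdeg D v = card {w. (v, w) \<in> D}"

definition indeg :: "('a \<times> 'a) set \<Rightarrow> 'a \<Rightarrow> nat" where
  "indeg D v = card {w. (w, v) \<in> D}"

text \<open>Eulerian (spanning) subdigraphs of D, identified with their arc sets.\<close>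
definition eulerian_sub :: "('a \<times> 'a) set \<Rightarrow> ('a \<times> 'a) set \<Rightarrow> bool" where
  "eulerian_sub D S \<longleftrightarrow> S \<subseteq> D \<and> (\<forall>v. indeg S v = outdeg S v)"

definition AT_orientation :: "('a \<times> 'a) set \<Rightarrow> bool" where
  "AT_orientation D \<longleftrightarrow>
     card {S. eulerian_sub D S \<and> even (card S)} \<noteq> card {S. eulerian_sub D S \<and> odd (card S)}"

text \<open>AT(G): least k with an AT-orientation of maximum outdegree at most k - 1
  (i.e. every outdegree < k).\<close>
definition AT :: "'a set \<Rightarrow> 'a set set \<Rightarrow> nat" where
  "AT V E = (LEAST k. \<exists>D. orientation V E D \<and> AT_orientation D \<and> (\<forall>v\<in>V. outdeg D v < k))"

text \<open>The graph T(G) on V(G) \<union> E(G), with vertices Inl v and edges Inr e.\<close>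
definition TV :: "'a set \<Rightarrow> 'a set set \<Rightarrow> ('a + 'a set) set" where
  "TV V E = Inl ` V \<union> Inr ` E"

definition TE :: "'a set \<Rightarrow> 'a set set \<Rightarrow> ('a + 'a set) set set" where
  "TE V E = {{Inl x, Inl y} | x y. {x, y} \<in> E}
          \<union> {{Inr e, Inl x} | e x. e \<in> E \<and> x \<in> e}
          \<union> {{Inr e, Inr e'} | e e'. e \<in> E \<and> e' \<in> E \<and> e \<noteq> e' \<and> e \<inter> e' \<noteq> {}}"

definition prodT_V :: "'a set \<Rightarrow> 'a set set \<Rightarrow> 'b set \<Rightarrow> 'b set set \<Rightarrow> (('a + 'a set) \<times> 'b) set" where
  "prodT_V VG EG VH EH = TV VG EG \<times> VH"

definition prodT_E :: "'a set \<Rightarrow> 'a set set \<Rightarrow> 'b set \<Rightarrow> 'b set set \<Rightarrow> (('a + 'a set) \<times> 'b) set set" where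
  "prodT_E VG EG VH EH =
     {{(Inl v, u2), (Inl v, v2)} | v u2 v2. v \<in> VG \<and> {u2, v2} \<in> EH}
   \<union> {{(u1, w), (v1, w)} | u1 v1 w. w \<in> VH \<and> {u1, v1} \<in> TE VG EG}"

end

theory Submission
  imports Defs "HOL-Library.Product_Lexorder"
begin

text \<open>An orientation that increases along an injective ranking of the vertices is acyclic, so
  its only Eulerian subgraph is the empty one and it is an AT-orientation; hence AT is at most one
  more than the largest number of higher-ranked neighbours of a vertex, which for a degeneracy order
  is the degeneracy.

  For \<open>G +\<^sub>T H\<close> rank every copy \<open>(e, h)\<close> of an edge-vertex of \<open>T(G)\<close> below all copies
  \<open>(v, h)\<close> of vertices of \<open>G\<close>, and order the latter lexicographically by degeneracy orders of
  \<open>G\<close> and \<open>H\<close>. A copy \<open>(e, h)\<close> with \<open>e = xy\<close> has neighbours only in its own layer: \<open>x\<close>,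
  \<open>y\<close> and the at most \<open>(d(x) - 1) + (d(y) - 1)\<close> other edges meeting \<open>e\<close>, so at most
  \<open>2\<Delta>(G)\<close> in total. The higher neighbours of \<open>(v, h)\<close> are its higher \<open>G\<close>-neighbours in
  layer \<open>h\<close> and its higher \<open>H\<close>-neighbours in the fibre of \<open>v\<close>, at most \<open>k + l\<close> of them.\<close>

lemma nth_in_set_drop_iff:
  assumes "distinct xs" "j < length xs"
  shows "xs ! j \<in> set (drop n xs) \<longleftrightarrow> n \<le> j"
proof
  assume "xs ! j \<in> set (drop n xs)"
  then obtain t where "t < length (drop n xs)" "drop n xs ! t = xs ! j"
    by (auto simp: in_set_conv_nth)
  then have "xs ! (n + t) = xs ! j" "n + t < length xs" by auto
  with assms have "n + t = j" using nth_eq_iff_index_eq by blast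
  then show "n \<le> j" by simp
next
  assume "n \<le> j"
  with assms have "drop n xs ! (j - n) = xs ! j" "j - n < length (drop n xs)" by auto
  then show "xs ! j \<in> set (drop n xs)" by (metis nth_mem)
qed

definition forward_neighbours ::
    "'a set \<Rightarrow> 'a set set \<Rightarrow> ('a \<Rightarrow> 'c::linorder) \<Rightarrow> 'a \<Rightarrow> 'a set" where
  "forward_neighbours V E r v = {u\<in>V. r v < r u \<and> {v, u} \<in> E}"

definition degenerate_ranking ::
    "'a set \<Rightarrow> 'a set set \<Rightarrow> ('a \<Rightarrow> 'c::linorder) \<Rightarrow> nat \<Rightarrow> bool" where
  "degenerate_ranking V E r k \<longleftrightarrow>
     inj_on r V \<and> (\<forall>v\<in>V. card (forward_neighbours V E r v) \<le> k)"

lemma degenerate_imp_degenerate_ranking: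
  assumes "degenerate V E k"
  obtains r :: "'a \<Rightarrow> nat" where "degenerate_ranking V E r k"
proof -
  obtain vs where vs: "distinct vs" "set vs = V"
    and bound: "\<forall>i<length vs. card {u \<in> set (drop (Suc i) vs). {vs ! i, u} \<in> E} \<le> k"
    using assms unfolding degenerate_def by blast
  define r where "r = inv_into {..<length vs} ((!) vs)"
  have bij: "bij_betw ((!) vs) {..<length vs} V"
    using vs by (simp add: bij_betw_nth)
  have r: "r v < length vs" "vs ! r v = v" if "v \<in> V" for v
    using that bij unfolding r_def by (auto simp: bij_betw_def inv_into_into f_inv_into_f)
  have drop: "u \<in> set (drop n vs) \<longleftrightarrow> u \<in> V \<and> n \<le> r u" for u n
  proof (cases "u \<in> V")
    case True
    then show ?thesis
      using nth_in_set_drop_iff[OF vs(1) r(1)[OF True], of n] r(2)[OF True] by simp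
  next
    case False
    then show ?thesis using vs(2) by (auto dest: in_set_dropD)
  qed
  have "forward_neighbours V E r v = {u \<in> set (drop (Suc (r v)) vs). {vs ! r v, u} \<in> E}"
    if "v \<in> V" for v
    using that by (auto simp: forward_neighbours_def drop r Suc_le_eq)
  then have "card (forward_neighbours V E r v) \<le> k" if "v \<in> V" for v
    using bound r(1) that by simp
  moreover have "inj_on r V"
    by (rule inj_onI) (metis r(2))
  ultimately show thesis
    using that unfolding degenerate_ranking_def by blast
qed

lemma eulerian_sub_rank_increasing_eq_empty:
  fixes r :: "'a \<Rightarrow> 'c::linorder"
  assumes "finite D" and increasing: "\<forall>(a, b)\<in>D. r a < r b" and "eulerian_sub D S"
  shows "S = {}"
proof (rule ccontr)
  assume "S \<noteq> {}"
  have "finite S" "S \<subseteq> D" and balanced: "indeg S v = outdeg S v" for v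
    using assms by (auto simp: eulerian_sub_def intro: finite_subset)
  then obtain a b where ab: "(a, b) \<in> S" and min: "\<And>x y. (x, y) \<in> S \<Longrightarrow> \<not> r x < r a"
    using ex_is_arg_min_if_finite[OF _ \<open>S \<noteq> {}\<close>, of "r \<circ> fst"] unfolding is_arg_min_def by force
  have "{w. (w, a) \<in> S} = {}"
    using min increasing \<open>S \<subseteq> D\<close> by blast
  then have "outdeg S a = 0"
    using balanced[of a] by (simp add: indeg_def)
  moreover have "finite {w. (a, w) \<in> S}"
    using finite_imageI[OF \<open>finite S\<close>, of snd] by (rule rev_finite_subset) force
  ultimately show False
    using ab by (simp add: outdeg_def)
qed

lemma AT_orientation_if_rank_increasing:
  fixes r :: "'a \<Rightarrow> 'c::linorder"
  assumes "finite D" "\<forall>(a, b)\<in>D. r a < r b"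
  shows "AT_orientation D"
proof -
  have "eulerian_sub D {}"
    by (simp add: eulerian_sub_def indeg_def outdeg_def)
  then have eulerian_iff: "eulerian_sub D S \<longleftrightarrow> S = {}" for S
    using eulerian_sub_rank_increasing_eq_empty[OF assms] by blast
  have even: "{S. eulerian_sub D S \<and> even (card S)} = {{}}"
    and odd: "{S. eulerian_sub D S \<and> odd (card S)} = {}"
    unfolding eulerian_iff by auto
  show ?thesis
    unfolding AT_orientation_def even odd by simp
qed

lemma AT_le_if_degenerate_ranking:
  assumes "finite V" "\<forall>e\<in>E. e \<subseteq> V" and ranking: "degenerate_ranking V E r d"
  shows "AT V E \<le> d + 1"
proof -
  define D where "D = {(a, b). {a, b} \<in> E \<and> r a < r b}"
  have "D \<subseteq> V \<times> V"
    using assms(2) by (auto simp: D_def)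
  then have "AT_orientation D"
    using assms(1)
    by (intro AT_orientation_if_rank_increasing[of D r]) (auto simp: D_def finite_subset)
  moreover have "orientation V E D"
    unfolding orientation_def
  proof (intro conjI allI impI)
    fix x y assume "{x, y} \<in> E" "x \<noteq> y"
    moreover have "x \<in> V" "y \<in> V"
      using assms(2) \<open>{x, y} \<in> E\<close> by auto
    ultimately have "r x \<noteq> r y"
      using ranking by (auto simp: degenerate_ranking_def dest: inj_onD)
    then show "(x, y) \<in> D \<longleftrightarrow> (y, x) \<notin> D"
      using \<open>{x, y} \<in> E\<close> by (auto simp: D_def insert_commute)
  qed (auto simp: D_def)
  moreover have "outdeg D v < d + 1" if "v \<in> V" for v
  proof -
    have "{w. (v, w) \<in> D} = forward_neighbours V E r v"
      using assms(2) by (auto simp: D_def forward_neighbours_def)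
    then show ?thesis
      using ranking that by (simp add: degenerate_ranking_def outdeg_def less_Suc_eq_le)
  qed
  ultimately show ?thesis
    unfolding AT_def by (intro Least_le) blast
qed

lemma TE_Inr_neighbour:
  assumes "{Inr e, u} \<in> TE VG EG"
  shows "e \<in> EG \<and> (\<exists>x\<in>e. u = Inl x \<or> (\<exists>e'\<in>EG. e' \<noteq> e \<and> x \<in> e' \<and> u = Inr e'))"
  using assms unfolding TE_def by (auto simp: doubleton_eq_iff)

lemma TE_Inl_Inl:
  assumes "{Inl a, Inl b} \<in> TE VG EG"
  shows "{a, b} \<in> EG"
  using assms unfolding TE_def by (auto simp: doubleton_eq_iff insert_commute)

lemma simple_graph_finite_edges:
  assumes "simple_graph V E"
  shows "finite E"
proof -
  have "E \<subseteq> Pow V"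
    using assms by (auto simp: simple_graph_def)
  then show ?thesis
    using assms by (auto simp: simple_graph_def intro: finite_subset)
qed

lemma finite_TV:
  assumes "simple_graph VG EG"
  shows "finite (TV VG EG)"
  using assms simple_graph_finite_edges[OF assms] by (simp add: simple_graph_def TV_def)

lemma TE_subset_TV:
  assumes "simple_graph VG EG" "f \<in> TE VG EG"
  shows "f \<subseteq> TV VG EG"
  using assms unfolding simple_graph_def TE_def TV_def by (fastforce simp: doubleton_eq_iff)

lemma degree_le_max_degree:
  assumes "finite V" "v \<in> V"
  shows "degree E v \<le> max_degree V E"
  using assms unfolding max_degree_def by (auto intro: Max_ge)

lemma card_TE_neighbours_Inr_le:
  assumes G: "simple_graph VG EG" and "e \<in> EG"
  shows "card {u. {Inr e, u} \<in> TE VG EG} \<le> 2 * max_degree VG EG"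
proof -
  obtain x y where e: "e = {x, y}" "x \<in> VG" "y \<in> VG"
    using assms unfolding simple_graph_def by blast
  have "finite EG"
    using G by (rule simple_graph_finite_edges)
  define N where "N z = insert (Inl z) (Inr ` ({e'\<in>EG. z \<in> e'} - {e}))" for z
  have N: "card (N z) \<le> degree EG z" if "z \<in> e" for z
  proof -
    have incident: "e \<in> {e'\<in>EG. z \<in> e'}"
      using that \<open>e \<in> EG\<close> by simp
    have "Suc (card ({e'\<in>EG. z \<in> e'} - {e})) = degree EG z"
      unfolding degree_def by (rule card_Suc_Diff1[OF _ incident]) (simp add: \<open>finite EG\<close>)
    moreover have "card (N z) \<le> Suc (card ({e'\<in>EG. z \<in> e'} - {e}))"
      by (simp add: N_def card_insert_if card_image \<open>finite EG\<close>)
    ultimately show ?thesis by simp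
  qed
  have "{u. {Inr e, u} \<in> TE VG EG} \<subseteq> N x \<union> N y"
    using TE_Inr_neighbour e by (fastforce simp: N_def)
  then have "card {u. {Inr e, u} \<in> TE VG EG} \<le> card (N x \<union> N y)"
    by (rule card_mono[rotated]) (simp add: N_def \<open>finite EG\<close>)
  also have "\<dots> \<le> card (N x) + card (N y)"
    by (rule card_Un_le)
  also have "\<dots> \<le> degree EG x + degree EG y"
    using N e by (intro add_mono) auto
  also have "\<dots> \<le> 2 * max_degree VG EG"
    using G e degree_le_max_degree[of VG x EG] degree_le_max_degree[of VG y EG]
    by (simp add: simple_graph_def)
  finally show ?thesis .
qed

lemma prodT_E_Inr_neighbour:
  assumes "{(Inr e, h), u} \<in> prodT_E VG EG VH EH"
  shows "\<exists>x. u = (x, h) \<and> {Inr e, x} \<in> TE VG EG"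
  using assms unfolding prodT_E_def by (auto simp: doubleton_eq_iff insert_commute)

lemma prodT_E_Inl_Inl:
  assumes "{(Inl v, h), (Inl v', h')} \<in> prodT_E VG EG VH EH"
  shows "(v = v' \<and> {h, h'} \<in> EH) \<or> (h = h' \<and> {v, v'} \<in> EG)"
  using assms unfolding prodT_E_def
  by (auto simp: doubleton_eq_iff insert_commute dest: TE_Inl_Inl)

lemma prodT_E_subset_prodT_V:
  assumes "simple_graph VG EG" "simple_graph VH EH" "f \<in> prodT_E VG EG VH EH"
  shows "f \<subseteq> prodT_V VG EG VH EH"
  using assms TE_subset_TV[OF assms(1)] unfolding prodT_E_def prodT_V_def
  by (fastforce simp: simple_graph_def TV_def doubleton_eq_iff)

lemma finite_prodT_V:
  assumes "simple_graph VG EG" "simple_graph VH EH"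
  shows "finite (prodT_V VG EG VH EH)"
  using finite_TV[OF assms(1)] assms(2) by (simp add: prodT_V_def simple_graph_def)

definition prodT_rank ::
    "('a \<Rightarrow> 'c::linorder) \<Rightarrow> ('a set \<Rightarrow> 'c) \<Rightarrow> ('b \<Rightarrow> 'd::linorder) \<Rightarrow>
     ('a + 'a set) \<times> 'b \<Rightarrow> (nat \<times> 'c) \<times> 'd" where
  "prodT_rank rg re rh = (\<lambda>(x, h). (case x of Inr e \<Rightarrow> (0, re e) | Inl v \<Rightarrow> (1, rg v), rh h))"

lemma prodT_rank_simps [simp]:
  "prodT_rank rg re rh (Inr e, h) = ((0, re e), rh h)"
  "prodT_rank rg re rh (Inl v, h) = ((1, rg v), rh h)"
  by (simp_all add: prodT_rank_def)

lemma inj_on_prodT_rank: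
  assumes "inj_on rg VG" "inj_on re EG" "inj_on rh VH"
  shows "inj_on (prodT_rank rg re rh) (prodT_V VG EG VH EH)"
proof (rule inj_onI)
  fix p q assume "p \<in> prodT_V VG EG VH EH" "q \<in> prodT_V VG EG VH EH"
    and "prodT_rank rg re rh p = prodT_rank rg re rh q"
  then show "p = q"
    using assms by (auto simp: prodT_V_def TV_def dest: inj_onD)
qed

lemma card_forward_prodT_Inr_le:
  assumes G: "simple_graph VG EG" and "e \<in> EG"
  shows "card (forward_neighbours (prodT_V VG EG VH EH) (prodT_E VG EG VH EH) r (Inr e, h))
           \<le> 2 * max_degree VG EG"
proof -
  let ?N = "{x. {Inr e, x} \<in> TE VG EG}"
  have "?N \<subseteq> TV VG EG"
    using TE_subset_TV[OF G] by blast
  then have "finite ?N"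
    using finite_TV[OF G] by (rule finite_subset)
  have "forward_neighbours (prodT_V VG EG VH EH) (prodT_E VG EG VH EH) r (Inr e, h)
          \<subseteq> (\<lambda>x. (x, h)) ` ?N"
    using prodT_E_Inr_neighbour by (fastforce simp: forward_neighbours_def)
  then have "card (forward_neighbours (prodT_V VG EG VH EH) (prodT_E VG EG VH EH) r (Inr e, h))
               \<le> card ((\<lambda>x. (x, h)) ` ?N)"
    using \<open>finite ?N\<close> by (intro card_mono) auto
  also have "\<dots> \<le> card ?N"
    using \<open>finite ?N\<close> by (rule card_image_le)
  also have "\<dots> \<le> 2 * max_degree VG EG"
    using assms by (rule card_TE_neighbours_Inr_le)
  finally show ?thesis .
qed

lemma card_forward_prodT_Inl_le:
  assumes "simple_graph VG EG" "simple_graph VH EH"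
    and G: "degenerate_ranking VG EG rg k" and H: "degenerate_ranking VH EH rh l"
    and "v \<in> VG" "h \<in> VH"
  shows "card (forward_neighbours (prodT_V VG EG VH EH) (prodT_E VG EG VH EH)
                (prodT_rank rg re rh) (Inl v, h)) \<le> k + l"
proof -
  let ?X = "(\<lambda>v'. (Inl v', h)) ` forward_neighbours VG EG rg v :: (('a + 'a set) \<times> 'b) set"
  let ?Y = "(\<lambda>h'. (Inl v, h')) ` forward_neighbours VH EH rh h :: (('a + 'a set) \<times> 'b) set"
  have sub: "forward_neighbours (prodT_V VG EG VH EH) (prodT_E VG EG VH EH)
               (prodT_rank rg re rh) (Inl v, h) \<subseteq> ?X \<union> ?Y"
  proof
    fix u assume u: "u \<in> forward_neighbours (prodT_V VG EG VH EH) (prodT_E VG EG VH EH)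
                                 (prodT_rank rg re rh) (Inl v, h)"
    then obtain v' h' where u': "u = (Inl v', h')" "v' \<in> VG" "h' \<in> VH"
      by (auto simp: forward_neighbours_def prodT_V_def TV_def)
    with u have less: "((1::nat, rg v), rh h) < ((1, rg v'), rh h')"
      and "{(Inl v, h), (Inl v', h')} \<in> prodT_E VG EG VH EH"
      by (auto simp: forward_neighbours_def)
    from this(2) have "(v = v' \<and> {h, h'} \<in> EH) \<or> (h = h' \<and> {v, v'} \<in> EG)"
      by (rule prodT_E_Inl_Inl)
    then show "u \<in> ?X \<union> ?Y"
    proof
      assume "v = v' \<and> {h, h'} \<in> EH"
      with less u' show ?thesis by (auto simp: forward_neighbours_def)
    next
      assume "h = h' \<and> {v, v'} \<in> EG"
      with less u' show ?thesis by (auto simp: forward_neighbours_def)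
    qed
  qed
  have "finite (?X \<union> ?Y)"
    using assms(1,2) by (auto simp: simple_graph_def forward_neighbours_def)
  then have "card (forward_neighbours (prodT_V VG EG VH EH) (prodT_E VG EG VH EH)
                     (prodT_rank rg re rh) (Inl v, h)) \<le> card (?X \<union> ?Y)"
    using sub by (rule card_mono)
  also have "\<dots> \<le> card ?X + card ?Y"
    by (rule card_Un_le)
  also have "\<dots> \<le> k + l"
    using G H assms(5,6) by (simp add: card_image inj_on_def degenerate_ranking_def add_mono)
  finally show ?thesis .
qed

lemma degenerate_ranking_prodT:
  assumes "simple_graph VG EG" "simple_graph VH EH"
    and G: "degenerate_ranking VG EG rg k" and H: "degenerate_ranking VH EH rh l"
    and "inj_on re EG"
  shows "degenerate_ranking (prodT_V VG EG VH EH) (prodT_E VG EG VH EH) (prodT_rank rg re rh)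
           (max (2 * max_degree VG EG) (k + l))"
proof -
  have "card (forward_neighbours (prodT_V VG EG VH EH) (prodT_E VG EG VH EH)
                (prodT_rank rg re rh) p) \<le> max (2 * max_degree VG EG) (k + l)" if "p \<in> prodT_V VG EG VH EH" for p
    using that card_forward_prodT_Inr_le[OF assms(1)] card_forward_prodT_Inl_le[OF assms(1-4)]
    by (fastforce simp: prodT_V_def TV_def intro: le_trans)
  moreover have "inj_on (prodT_rank rg re rh) (prodT_V VG EG VH EH)"
    using G H \<open>inj_on re EG\<close> by (simp add: inj_on_prodT_rank degenerate_ranking_def)
  ultimately show ?thesis
    by (simp add: degenerate_ranking_def)
qed

theorem corollary3p10:
  fixes VG :: "'a set" and EG :: "'a set set" and VH :: "'b set" and EH :: "'b set set"
    and k l :: nat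
  assumes "simple_graph VG EG" and "simple_graph VH EH"
    and "degenerate VG EG k" and "degenerate VH EH l"
  shows "AT (prodT_V VG EG VH EH) (prodT_E VG EG VH EH)
           \<le> max (2 * max_degree VG EG) (k + l) + 1"
proof -
  obtain rg :: "'a \<Rightarrow> nat" where rg: "degenerate_ranking VG EG rg k"
    using degenerate_imp_degenerate_ranking[OF assms(3)] .
  obtain rh :: "'b \<Rightarrow> nat" where rh: "degenerate_ranking VH EH rh l"
    using degenerate_imp_degenerate_ranking[OF assms(4)] .
  obtain re :: "'a set \<Rightarrow> nat" where re: "inj_on re EG"
    using finite_imp_inj_to_nat_seg[OF simple_graph_finite_edges[OF assms(1)]] by blast
  show ?thesis
  proof (rule AT_le_if_degenerate_ranking)
    show "finite (prodT_V VG EG VH EH)"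
      using assms(1,2) by (rule finite_prodT_V)
    show "\<forall>f\<in>prodT_E VG EG VH EH. f \<subseteq> prodT_V VG EG VH EH"
      using prodT_E_subset_prodT_V[OF assms(1,2)] by blast
    show "degenerate_ranking (prodT_V VG EG VH EH) (prodT_E VG EG VH EH) (prodT_rank rg re rh)
            (max (2 * max_degree VG EG) (k + l))"
      using assms(1,2) rg rh re by (rule degenerate_ranking_prodT)
  qed
qed

end
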